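(* Let $UI(X:Y\setminus Z)$, $UI(X:Z\setminus Y)$, $SI(X:Y;Z)$ and $CI(X:Y;Z)$ be non-negative continuous real functions on $\Delta$ such that for every $P\in\Delta$: (i) $MI(X:(Y,Z)) = SI(X:Y;Z) + UI(X:Y\setminus Z) + UI(X:Z\setminus Y) + CI(X:Y;Z)$, (ii) $MI(X:Y) = SI(X:Y;Z) + UI(X:Y\setminus Z)$ and $MI(X:Z) = SI(X:Y;Z) + UI(X:Z\setminus Y)$, (all quantities evaluated at $P$), and such that (iii) $UI(X:Y\setminus Z)$ and $UI(X:Z\setminus Y)$ take the same value at any two distributions $P,P'\in\Delta$ having the same $(X,Y)$-marginal and the same $(X,Z)$-marginal. Then for every $P\in\Delta$: $UI(X:Y\setminus Z)\le \widetilde{UI}(X:Y\setminus Z)$, $UI(X:Z\setminus Y)\le \widetilde{UI}(X:Z\setminus Y)$, $SI(X:Y;Z)\ge \widetilde{SI}(X:Y;Z)$, and $CI(X:Y;Z)\ge\widetilde{CI}(X:Y;Z)$. Moreover, if for $P\in\Delta$ there exists $Q\in\Delta_P$ with $CI_Q(X:Y;Z)=0$ (i.e. $CI$ evaluated at $Q$ vanishes), then equality holds in all four inequalities at $P$. Conversely, if equality holds at $P$ in one of the four inequalities, then there exists $Q\in\Delta_P$ with $CI_Q(X:Y;Z)=0$.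
   Context: $X,Y,Z$ are random variables with finite state spaces $\mathcal X,\mathcal Y,\mathcal Z$. $\Delta$ denotes the set of all probability distributions on $\mathcal X\times\mathcal Y\times\mathcal Z$ (joint distributions of $X,Y,Z$); $P\in\Delta$ denotes the "true" joint distribution, and information quantities without subscript are computed w.r.t. $P$, while a subscript $Q$ (e.g. $MI_Q$, $H_Q$) means computed w.r.t. $Q\in\Delta$. For $P\in\Delta$, $\Delta_P=\{Q\in\Delta: Q(X=x,Y=y)=P(X=x,Y=y)\text{ and }Q(X=x,Z=z)=P(X=x,Z=z)\ \forall x,y,z\}$. Co-information: $CoI_Q(X;Y;Z)=MI_Q(X:Y)-MI_Q(X:Y|Z)$. Define $\widetilde{UI}(X:Y\setminus Z)=\min_{Q\in\Delta_P}MI_Q(X:Y|Z)$, $\widetilde{UI}(X:Z\setminus Y)=\min_{Q\in\Delta_P}MI_Q(X:Z|Y)$, $\widetilde{SI}(X:Y;Z)=\max_{Q\in\Delta_P}CoI_Q(X;Y;Z)$, $\widetilde{CI}(X:Y;Z)=MI(X:(Y,Z))-\min_{Q\in\Delta_P}MI_Q(X:(Y,Z))$. *)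

theory Defs
  imports "HOL-Analysis.Analysis"
begin

type_synonym ('x,'y,'z) dist3 = "('x \<times> 'y \<times> 'z) \<Rightarrow> real"

definition Delta :: "('x::finite,'y::finite,'z::finite) dist3 set" where
  "Delta = {Q. (\<forall>w. Q w \<ge> 0) \<and> (\<Sum>w\<in>UNIV. Q w) = 1}"

definition pX :: "('x::finite,'y::finite,'z::finite) dist3 \<Rightarrow> 'x \<Rightarrow> real" where
  "pX Q x = (\<Sum>y\<in>UNIV. \<Sum>z\<in>UNIV. Q (x,y,z))"
definition pY :: "('x::finite,'y::finite,'z::finite) dist3 \<Rightarrow> 'y \<Rightarrow> real" where
  "pY Q y = (\<Sum>x\<in>UNIV. \<Sum>z\<in>UNIV. Q (x,y,z))"
definition pZ :: "('x::finite,'y::finite,'z::finite) dist3 \<Rightarrow> 'z \<Rightarrow> real" where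
  "pZ Q z = (\<Sum>x\<in>UNIV. \<Sum>y\<in>UNIV. Q (x,y,z))"
definition pXY :: "('x::finite,'y::finite,'z::finite) dist3 \<Rightarrow> 'x \<Rightarrow> 'y \<Rightarrow> real" where
  "pXY Q x y = (\<Sum>z\<in>UNIV. Q (x,y,z))"
definition pXZ :: "('x::finite,'y::finite,'z::finite) dist3 \<Rightarrow> 'x \<Rightarrow> 'z \<Rightarrow> real" where
  "pXZ Q x z = (\<Sum>y\<in>UNIV. Q (x,y,z))"
definition pYZ :: "('x::finite,'y::finite,'z::finite) dist3 \<Rightarrow> 'y \<Rightarrow> 'z \<Rightarrow> real" where
  "pYZ Q y z = (\<Sum>x\<in>UNIV. Q (x,y,z))"

definition MI_XY :: "('x::finite,'y::finite,'z::finite) dist3 \<Rightarrow> real" where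
  "MI_XY Q = (\<Sum>x\<in>UNIV. \<Sum>y\<in>UNIV. if pXY Q x y = 0 then 0
      else pXY Q x y * log 2 (pXY Q x y / (pX Q x * pY Q y)))"

definition MI_XZ :: "('x::finite,'y::finite,'z::finite) dist3 \<Rightarrow> real" where
  "MI_XZ Q = (\<Sum>x\<in>UNIV. \<Sum>z\<in>UNIV. if pXZ Q x z = 0 then 0
      else pXZ Q x z * log 2 (pXZ Q x z / (pX Q x * pZ Q z)))"

definition MI_X_YZ :: "('x::finite,'y::finite,'z::finite) dist3 \<Rightarrow> real" where
  "MI_X_YZ Q = (\<Sum>x\<in>UNIV. \<Sum>y\<in>UNIV. \<Sum>z\<in>UNIV. if Q (x,y,z) = 0 then 0
      else Q (x,y,z) * log 2 (Q (x,y,z) / (pX Q x * pYZ Q y z)))"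

definition MI_XY_given_Z :: "('x::finite,'y::finite,'z::finite) dist3 \<Rightarrow> real" where
  "MI_XY_given_Z Q = (\<Sum>x\<in>UNIV. \<Sum>y\<in>UNIV. \<Sum>z\<in>UNIV. if Q (x,y,z) = 0 then 0
      else Q (x,y,z) * log 2 (Q (x,y,z) * pZ Q z / (pXZ Q x z * pYZ Q y z)))"

definition MI_XZ_given_Y :: "('x::finite,'y::finite,'z::finite) dist3 \<Rightarrow> real" where
  "MI_XZ_given_Y Q = (\<Sum>x\<in>UNIV. \<Sum>y\<in>UNIV. \<Sum>z\<in>UNIV. if Q (x,y,z) = 0 then 0
      else Q (x,y,z) * log 2 (Q (x,y,z) * pY Q y / (pXY Q x y * pYZ Q y z)))"

definition CoI :: "('x::finite,'y::finite,'z::finite) dist3 \<Rightarrow> real" where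
  "CoI Q = MI_XY Q - MI_XY_given_Z Q"

definition DeltaP :: "('x::finite,'y::finite,'z::finite) dist3 \<Rightarrow> ('x,'y,'z) dist3 set" where
  "DeltaP P = {Q \<in> Delta. pXY Q = pXY P \<and> pXZ Q = pXZ P}"

text \<open>The paper's min/max over the compact set DeltaP P (attained) are written as Inf/Sup.\<close>

definition UIt_Y :: "('x::finite,'y::finite,'z::finite) dist3 \<Rightarrow> real" where
  "UIt_Y P = Inf (MI_XY_given_Z ` DeltaP P)"
definition UIt_Z :: "('x::finite,'y::finite,'z::finite) dist3 \<Rightarrow> real" where
  "UIt_Z P = Inf (MI_XZ_given_Y ` DeltaP P)"
definition SIt :: "('x::finite,'y::finite,'z::finite) dist3 \<Rightarrow> real" where
  "SIt P = Sup (CoI ` DeltaP P)"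
definition CIt :: "('x::finite,'y::finite,'z::finite) dist3 \<Rightarrow> real" where
  "CIt P = MI_X_YZ P - Inf (MI_X_YZ ` DeltaP P)"

end

theory Submission
  imports Defs
begin

text \<open>
  On the fibre \<open>DeltaP P\<close> the quantities \<open>UIY\<close>, \<open>UIZ\<close>, \<open>MI_XY\<close> and \<open>MI_XZ\<close> are constant,
  hence so is \<open>SI\<close>. The chain rules \<open>MI(X:(Y,Z)) = MI(X:Z) + MI(X:Y|Z) = MI(X:Y) + MI(X:Z|Y)\<close>
  then show that \<open>MI_Q(X:Y|Z)\<close>, \<open>MI_Q(X:Z|Y)\<close>, \<open>CoI_Q\<close> and \<open>MI_Q(X:(Y,Z))\<close> differ from
  \<open>CI Q\<close> only by constants and signs. So all four optimisation problems are solved by a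
  minimiser \<open>Q\<^sub>0\<close> of the continuous function \<open>CI\<close> on the compact set \<open>DeltaP P\<close>, and each
  inequality of the theorem is an equality exactly when \<open>CI Q\<^sub>0 = 0\<close>.
\<close>

lemma joint_le_marginals:
  fixes Q :: "('x::finite,'y::finite,'z::finite) dist3"
  assumes nonneg: "\<forall>w. 0 \<le> Q w"
  shows "Q (x,y,z) \<le> pXY Q x y" "Q (x,y,z) \<le> pXZ Q x z" "Q (x,y,z) \<le> pYZ Q y z"
    and "Q (x,y,z) \<le> pX Q x" "Q (x,y,z) \<le> pY Q y" "Q (x,y,z) \<le> pZ Q z"
proof -
  have term_le_sum: "f i \<le> sum f UNIV" if "\<And>j. 0 \<le> f j" for f :: "'a::finite \<Rightarrow> real" and i
    by (rule member_le_sum) (simp_all add: that)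
  note nonneg = nonneg[rule_format]
  show xy: "Q (x,y,z) \<le> pXY Q x y" and xz: "Q (x,y,z) \<le> pXZ Q x z"
    and yz: "Q (x,y,z) \<le> pYZ Q y z"
    unfolding pXY_def pXZ_def pYZ_def by (rule term_le_sum, rule nonneg)+
  have "pXY Q x y \<le> pX Q x" "pXY Q x y \<le> pY Q y" "pXZ Q x z \<le> pZ Q z"
    unfolding pX_def pY_def pZ_def pXY_def pXZ_def
    by (rule term_le_sum, simp add: sum_nonneg nonneg)+
  with xy xz show "Q (x,y,z) \<le> pX Q x" "Q (x,y,z) \<le> pY Q y" "Q (x,y,z) \<le> pZ Q z"
    by linarith+
qed

lemma log_summand_split:
  fixes q b c d e :: real
  assumes "0 \<le> q" and pos: "0 < q \<Longrightarrow> 0 < b \<and> 0 < c \<and> 0 < d \<and> 0 < e"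
  shows "(if q = 0 then 0 else q * log 2 (q / (b * c)))
       = (if q = 0 then 0 else q * log 2 (q * d / (e * c))) + q * log 2 (e / (b * d))"
proof (cases "q = 0")
  case False
  with assms have "0 < q" "0 < b" "0 < c" "0 < d" "0 < e" by auto
  then have "log 2 (q * d / (e * c)) + log 2 (e / (b * d)) = log 2 (q * d / (e * c) * (e / (b * d)))"
    by (subst log_mult) auto
  also have "\<dots> = log 2 (q / (b * c))"
    using \<open>0 < d\<close> \<open>0 < e\<close> by (simp add: field_simps)
  finally show ?thesis
    using False by (simp flip: distrib_left)
qed simp

lemma MI_X_YZ_chain_rule_Z:
  fixes Q :: "('x::finite,'y::finite,'z::finite) dist3"
  assumes nonneg: "\<forall>w. 0 \<le> Q w"
  shows "MI_X_YZ Q = MI_XZ Q + MI_XY_given_Z Q"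
proof -
  define L where "L x z = log 2 (pXZ Q x z / (pX Q x * pZ Q z))" for x z
  have summand: "(if Q (x,y,z) = 0 then 0 else Q (x,y,z) * log 2 (Q (x,y,z) / (pX Q x * pYZ Q y z)))
      = (if Q (x,y,z) = 0 then 0
         else Q (x,y,z) * log 2 (Q (x,y,z) * pZ Q z / (pXZ Q x z * pYZ Q y z)))
        + Q (x,y,z) * L x z" for x y z
    unfolding L_def using joint_le_marginals[OF nonneg, of x y z] nonneg
    by (intro log_summand_split) (simp, smt (verit))
  have "MI_X_YZ Q = MI_XY_given_Z Q + (\<Sum>x\<in>UNIV. \<Sum>y\<in>UNIV. \<Sum>z\<in>UNIV. Q (x,y,z) * L x z)"
    unfolding MI_X_YZ_def MI_XY_given_Z_def summand by (simp add: sum.distrib)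
  also have "(\<Sum>x\<in>UNIV. \<Sum>y\<in>UNIV. \<Sum>z\<in>UNIV. Q (x,y,z) * L x z)
      = (\<Sum>x\<in>UNIV. \<Sum>z\<in>UNIV. pXZ Q x z * L x z)"
    unfolding pXZ_def by (simp add: sum_distrib_right, intro sum.cong refl, rule sum.swap)
  also have "\<dots> = MI_XZ Q"
    unfolding MI_XZ_def L_def by (intro sum.cong refl) simp
  finally show ?thesis by simp
qed

lemma MI_X_YZ_chain_rule_Y:
  fixes Q :: "('x::finite,'y::finite,'z::finite) dist3"
  assumes nonneg: "\<forall>w. 0 \<le> Q w"
  shows "MI_X_YZ Q = MI_XY Q + MI_XZ_given_Y Q"
proof -
  define L where "L x y = log 2 (pXY Q x y / (pX Q x * pY Q y))" for x y
  have summand: "(if Q (x,y,z) = 0 then 0 else Q (x,y,z) * log 2 (Q (x,y,z) / (pX Q x * pYZ Q y z)))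
      = (if Q (x,y,z) = 0 then 0
         else Q (x,y,z) * log 2 (Q (x,y,z) * pY Q y / (pXY Q x y * pYZ Q y z)))
        + Q (x,y,z) * L x y" for x y z
    unfolding L_def using joint_le_marginals[OF nonneg, of x y z] nonneg
    by (intro log_summand_split) (simp, smt (verit))
  have "MI_X_YZ Q = MI_XZ_given_Y Q + (\<Sum>x\<in>UNIV. \<Sum>y\<in>UNIV. \<Sum>z\<in>UNIV. Q (x,y,z) * L x y)"
    unfolding MI_X_YZ_def MI_XZ_given_Y_def summand by (simp add: sum.distrib)
  also have "(\<Sum>x\<in>UNIV. \<Sum>y\<in>UNIV. \<Sum>z\<in>UNIV. Q (x,y,z) * L x y)
      = (\<Sum>x\<in>UNIV. \<Sum>y\<in>UNIV. pXY Q x y * L x y)"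
    unfolding pXY_def by (simp add: sum_distrib_right)
  also have "\<dots> = MI_XY Q"
    unfolding MI_XY_def L_def by (intro sum.cong refl) simp
  finally show ?thesis by simp
qed

lemma MI_XY_cong:
  fixes P Q :: "('x::finite,'y::finite,'z::finite) dist3"
  assumes "pXY Q = pXY P"
  shows "MI_XY Q = MI_XY P"
proof -
  have "pX R x = (\<Sum>y\<in>UNIV. pXY R x y)" "pY R y = (\<Sum>x\<in>UNIV. pXY R x y)"
    for R :: "('x,'y,'z) dist3" and x y
    unfolding pX_def pY_def pXY_def by simp_all
  with assms have "pX Q = pX P" "pY Q = pY P" by auto
  with assms show ?thesis unfolding MI_XY_def by (simp only:)
qed

lemma MI_XZ_cong:
  fixes P Q :: "('x::finite,'y::finite,'z::finite) dist3"
  assumes "pXZ Q = pXZ P"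
  shows "MI_XZ Q = MI_XZ P"
proof -
  have "pX R x = (\<Sum>z\<in>UNIV. pXZ R x z)" for R :: "('x,'y,'z) dist3" and x
    unfolding pX_def pXZ_def by (rule sum.swap)
  moreover have "pZ R z = (\<Sum>x\<in>UNIV. pXZ R x z)" for R :: "('x,'y,'z) dist3" and z
    unfolding pZ_def pXZ_def ..
  ultimately have "pX Q = pX P" "pZ Q = pZ P" using assms by auto
  with assms show ?thesis unfolding MI_XZ_def by (simp only:)
qed

lemma continuous_on_coordinate: "continuous_on S (\<lambda>Q::'a \<Rightarrow> real. Q i)"
  by (rule continuous_on_subset[OF continuous_on_product_coordinates]) simp

lemma compact_DeltaP: "compact (DeltaP (P::('x::finite,'y::finite,'z::finite) dist3))"
proof -
  let ?box = "PiE (UNIV::('x \<times> 'y \<times> 'z) set) (\<lambda>_. {0..1::real})"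
  let ?C = "{Q::('x,'y,'z) dist3. \<forall>w. 0 \<le> Q w} \<inter> {Q. (\<Sum>w\<in>UNIV. Q w) = 1}
     \<inter> (\<Inter>x. \<Inter>y. {Q. pXY Q x y = pXY P x y}) \<inter> (\<Inter>x. \<Inter>z. {Q. pXZ Q x z = pXZ P x z})"
  have "compactin (product_topology (\<lambda>_. euclidean) UNIV) ?box"
    by (simp add: compactin_PiE)
  then have "compact ?box"
    by (simp add: euclidean_product_topology compactin_euclidean_iff)
  moreover have "closed ?C"
    unfolding Collect_all_eq pXY_def pXZ_def
    by (intro closed_Int closed_INT ballI closed_Collect_le closed_Collect_eq
        continuous_on_const continuous_on_sum continuous_on_coordinate)
  moreover have "DeltaP P = ?box \<inter> ?C"
  proof (intro equalityI subsetI)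
    fix Q assume Q: "Q \<in> DeltaP P"
    then have "\<forall>w. 0 \<le> Q w" "(\<Sum>w\<in>UNIV. Q w) = 1" by (auto simp: DeltaP_def Delta_def)
    then have "Q w \<le> 1" for w using member_le_sum[of w UNIV Q] by auto
    with Q show "Q \<in> ?box \<inter> ?C"
      unfolding DeltaP_def Delta_def by (auto simp: PiE_def extensional_def)
  next
    fix Q assume "Q \<in> ?box \<inter> ?C"
    then show "Q \<in> DeltaP P" unfolding DeltaP_def Delta_def by (auto intro!: ext)
  qed
  ultimately show ?thesis by (simp add: compact_Int_closed)
qed

locale bivariate_decomposition =
  fixes UIY UIZ SI CI :: "('x::finite,'y::finite,'z::finite) dist3 \<Rightarrow> real"
  assumes MI_X_YZ_decomp: "P \<in> Delta \<Longrightarrow> MI_X_YZ P = SI P + UIY P + UIZ P + CI P"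
    and MI_XY_decomp: "P \<in> Delta \<Longrightarrow> MI_XY P = SI P + UIY P"
    and MI_XZ_decomp: "P \<in> Delta \<Longrightarrow> MI_XZ P = SI P + UIZ P"
    and UI_marginal_invariant: "P \<in> Delta \<Longrightarrow> P' \<in> Delta \<Longrightarrow> pXY P = pXY P' \<Longrightarrow>
                                  pXZ P = pXZ P' \<Longrightarrow> UIY P = UIY P' \<and> UIZ P = UIZ P'"
begin

lemma information_on_DeltaP:
  assumes P: "P \<in> Delta" and Q: "Q \<in> DeltaP P"
  shows "MI_XY_given_Z Q = UIY P + CI Q" "MI_XZ_given_Y Q = UIZ P + CI Q"
    and "CoI Q = SI P - CI Q" "MI_X_YZ Q = SI P + UIY P + UIZ P + CI Q"
proof -
  have QD: "Q \<in> Delta" and marg: "pXY Q = pXY P" "pXZ Q = pXZ P"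
    using Q by (auto simp: DeltaP_def)
  have UI: "UIY Q = UIY P" "UIZ Q = UIZ P"
    using UI_marginal_invariant[OF QD P marg] by auto
  have SI: "SI Q = SI P"
    using MI_XY_decomp[OF QD] MI_XY_decomp[OF P] MI_XY_cong[OF marg(1)] UI by linarith
  have nonneg: "\<forall>w. 0 \<le> Q w" using QD by (simp add: Delta_def)
  show "MI_XY_given_Z Q = UIY P + CI Q" "MI_XZ_given_Y Q = UIZ P + CI Q"
    and "CoI Q = SI P - CI Q" "MI_X_YZ Q = SI P + UIY P + UIZ P + CI Q"
    using MI_X_YZ_chain_rule_Z[OF nonneg] MI_X_YZ_chain_rule_Y[OF nonneg] SI UI
      MI_X_YZ_decomp[OF QD] MI_XY_decomp[OF QD] MI_XZ_decomp[OF QD]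
    unfolding CoI_def by linarith+
qed

lemma optima_at_CI_minimiser:
  assumes P: "P \<in> Delta" and Q0: "Q0 \<in> DeltaP P" and min: "\<And>Q. Q \<in> DeltaP P \<Longrightarrow> CI Q0 \<le> CI Q"
  shows "UIt_Y P = UIY P + CI Q0" "UIt_Z P = UIZ P + CI Q0"
    and "SIt P = SI P - CI Q0" "CIt P = CI P - CI Q0"
proof -
  note info = information_on_DeltaP[OF P]
  show "UIt_Y P = UIY P + CI Q0" "UIt_Z P = UIZ P + CI Q0"
    unfolding UIt_Y_def UIt_Z_def by (rule cInf_eq_minimum; use info Q0 min in auto)+
  show "SIt P = SI P - CI Q0"
    unfolding SIt_def by (rule cSup_eq_maximum) (use info Q0 min in auto)
  have "Inf (MI_X_YZ ` DeltaP P) = SI P + UIY P + UIZ P + CI Q0"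
    by (rule cInf_eq_minimum) (use info Q0 min in auto)
  then show "CIt P = CI P - CI Q0"
    unfolding CIt_def using MI_X_YZ_decomp[OF P] by simp
qed

end

theorem mainTheorem1:
  fixes UIY UIZ SI CI :: "('x::finite,'y::finite,'z::finite) dist3 \<Rightarrow> real"
  assumes nonneg: "\<forall>P\<in>Delta. UIY P \<ge> 0 \<and> UIZ P \<ge> 0 \<and> SI P \<ge> 0 \<and> CI P \<ge> 0"
    and cont: "continuous_on Delta UIY" "continuous_on Delta UIZ"
              "continuous_on Delta SI" "continuous_on Delta CI"
    and i: "\<forall>P\<in>Delta. MI_X_YZ P = SI P + UIY P + UIZ P + CI P"
    and ii: "\<forall>P\<in>Delta. MI_XY P = SI P + UIY P \<and> MI_XZ P = SI P + UIZ P"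
    and iii: "\<forall>P\<in>Delta. \<forall>P'\<in>Delta. pXY P = pXY P' \<and> pXZ P = pXZ P' \<longrightarrow>
                 UIY P = UIY P' \<and> UIZ P = UIZ P'"
  shows "\<forall>P\<in>Delta.
           UIY P \<le> UIt_Y P \<and> UIZ P \<le> UIt_Z P \<and> SI P \<ge> SIt P \<and> CI P \<ge> CIt P
         \<and> ((\<exists>Q\<in>DeltaP P. CI Q = 0) \<longrightarrow>
              UIY P = UIt_Y P \<and> UIZ P = UIt_Z P \<and> SI P = SIt P \<and> CI P = CIt P)
         \<and> ((UIY P = UIt_Y P \<or> UIZ P = UIt_Z P \<or> SI P = SIt P \<or> CI P = CIt P) \<longrightarrow>
              (\<exists>Q\<in>DeltaP P. CI Q = 0))"
proof
  fix P :: "('x,'y,'z) dist3" assume P: "P \<in> Delta"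
  interpret bivariate_decomposition UIY UIZ SI CI
    using i ii iii by unfold_locales blast+
  have fibre: "P \<in> DeltaP P" "DeltaP P \<subseteq> Delta" using P by (auto simp: DeltaP_def)
  obtain Q0 where Q0: "Q0 \<in> DeltaP P" and min: "\<And>Q. Q \<in> DeltaP P \<Longrightarrow> CI Q0 \<le> CI Q"
    using continuous_attains_inf[OF compact_DeltaP _ continuous_on_subset[OF cont(4) fibre(2)]]
      fibre(1) by blast
  have "0 \<le> CI Q0" using nonneg Q0 fibre(2) by auto
  then have "(\<exists>Q\<in>DeltaP P. CI Q = 0) \<longleftrightarrow> CI Q0 = 0"
    using Q0 min by force
  then show "UIY P \<le> UIt_Y P \<and> UIZ P \<le> UIt_Z P \<and> SI P \<ge> SIt P \<and> CI P \<ge> CIt P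
         \<and> ((\<exists>Q\<in>DeltaP P. CI Q = 0) \<longrightarrow>
              UIY P = UIt_Y P \<and> UIZ P = UIt_Z P \<and> SI P = SIt P \<and> CI P = CIt P)
         \<and> ((UIY P = UIt_Y P \<or> UIZ P = UIt_Z P \<or> SI P = SIt P \<or> CI P = CIt P) \<longrightarrow>
              (\<exists>Q\<in>DeltaP P. CI Q = 0))"
    using optima_at_CI_minimiser[OF P Q0 min] \<open>0 \<le> CI Q0\<close> by auto
qed

end
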